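(* Let $q$ be a query program, $P$ a partial model, $\mathcal{T}$ a theory, and $P',\mathcal{T}'$ the partial model and theory produced by the witness-generation construction. If $M\in\mathit{solutions}(P',\mathcal{T}')$, then $M\in\mathit{solutions}(P,\mathcal{T})$.
   Context: Linear systems. Fix a large finite reserve $\mathcal{X}$ of integer variables. A system of linear inequalities $\mathcal{S}$ is a finite set of inequalities $\sum_j a_{ij}x_j\le y_i$ (equations are written as pairs of inequalities). A valuation $k:\mathcal{X}\to\mathbb{Z}$ is a solution of $\mathcal{S}$ ($k\vDash\mathcal{S}$) if it satisfies all of them; $\mathcal{S}_1\vDash\mathcal{S}_2$ means every solution of $\mathcal{S}_1$ is a solution of $\mathcal{S}_2$. Models. A metamodel is a signature $\Sigma$ of unary class symbols, binary relation symbols, a unary existence symbol $\varepsilon$ and a binary equality symbol $\sim$. A (scoped) partial model $P=\langle O_P,I_P,\mathcal{S}_P\rangle$ consists of a finite object set $O_P$, a 3-valued interpretation $I_P(\sigma):O_P^{\mathrm{arity}(\sigma)}\to\{0,1,\tfrac12\}$ for each $\sigma\in\Sigma$ ($\tfrac12$ = unknown), and a scope $\mathcal{S}_P$ (a system of linear inequalities). $P$ is concrete if all values are $0$ or $1$, $I_P(\varepsilon)(o)=1$ for all $o$, $I_P(\sim)(o_1,o_2)=1$ iff $o_1=o_2$, and $\mathcal{S}_P$ has a solution. Refinement: for $\mathit{abs}:O_Q\to O_P$, $P\succcurlyeq_{\mathit{abs}}Q$ holds if for all $\sigma$ and tuples $\bar q$, $I_P(\sigma)(\mathit{abs}(\bar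 q))$ is $\tfrac12$ or equals $I_Q(\sigma)(\bar q)$; every $p$ with $I_P(\varepsilon)(p)=1$ has a preimage under $\mathit{abs}$; and $\mathcal{S}_Q\vDash\mathcal{S}_P$. $P\succcurlyeq Q$ if $P\succcurlyeq_{\mathit{abs}}Q$ for some $\mathit{abs}$. For a first-order predicate $\varphi$ over $\Sigma$ with free variables $v_1,\dots,v_n$ and a concrete model $M$, $M\#\varphi$ is the number of maps $Z:\{v_1,\dots,v_n\}\to O_M$ under which $\varphi$ is true in $M$. A theory $\mathcal{T}=\langle\Phi,r\rangle$ is a finite set $\Phi$ of predicates with a map $r:\Phi\to\mathcal{X}$; a concrete $M$ is compatible with it ($M\vDash\mathcal{T}$) if $\mathcal{S}_M\vDash r(\varphi)=M\#\varphi$ for all $\varphi\in\Phi$. $\mathit{solutions}(P,\mathcal{T})$ is the set of concrete models $M$ with $P\succcurlyeq M$ and $M\vDash\mathcal{T}$. Program and IPET. $q$ is a query program generated from a graph-query search plan (nested for-loops implementing extend constraints and if-statements implementing check constraints). $\mathit{BB}$ is its set of basic blocks; its weighted CFG is $\langle V,E,s,t,w,\mathit{tr}\rangle$ with edges $E\subseteq V\times V$, start/end $s,t$, weights $w:E\to\mathbb{N}$, traceability $\mathit{tr}:V\to\mathit{BB}$. $f:E\to\mathcal{X}$ assigns distinct variables to edges. $\mathcal{S}_{\mathrm{IPET}}$ contains $\sum_{e=\langle s,n\rangle}f(e)=1$, $\sum_{e=\langle n,t\rangle}f(e)=1$, flow conservation at every $n\ne s,t$, $-f(e)\le0$, and possibly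 further low-level flow facts. Basic block predicates. For $bb\in\mathit{BB}$, $\psi_{bb}$ is the conjunction of the atomic predicates of all for/if statements enclosing $bb$ (extend atoms without their existential quantifier; check literals as-is); $\psi_{bb}=\mathrm{true}$ if none. If $bb$ is the header of loop $\ell$, also $\psi'_{bb}=\psi_{bb}\wedge(\text{atom of }\ell)$. $\Psi$ is the set of all these predicates. Witness generation. Given $P=\langle O_P,I_P,\mathcal{S}_P\rangle$ and $\mathcal{T}=\langle\Phi,r\rangle$ (with the range of $f$ disjoint from the range of $r$ and from the variables of $\mathcal{S}_P$), extend $r$ to $r'$ on $\Phi\cup\Psi$ by assigning to each $\psi\in\Psi$ a fresh distinct variable (not in the range of $f$, of $r$, or in $\mathcal{S}_P$). $\mathcal{S}_{\mathrm{merge}}$ contains for each $bb$: $r'(\psi_{bb})+r'(\psi'_{bb})-\sum_{e=\langle n_1,n_2\rangle\in E,\mathit{tr}(n_1)=bb}f(e)=0$ if $bb$ is a loop header, else $r'(\psi_{bb})-\sum_{e=\langle n_1,n_2\rangle\in E,\mathit{tr}(n_1)=bb}f(e)=0$. Set $P'=\langle O_P,I_P,\mathcal{S}_P\cup\mathcal{S}_{\mathrm{IPET}}\cup\mathcal{S}_{\mathrm{merge}}\rangle$ and $\mathcal{T}'=\langle\Phi\cup\Psi,r'\rangle$. *)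

theory Defs
  imports Main "HOL-Library.FuncSet"
begin

type_synonym 'x ineq = "('x \<Rightarrow> int) \<times> int"
  \<comment> \<open>(a, y) stands for the inequality  sum_j a_j x_j <= y\<close>

definition sat_ineq :: "('x::finite \<Rightarrow> int) \<Rightarrow> 'x ineq \<Rightarrow> bool" where
  "sat_ineq k i = ((\<Sum>x\<in>UNIV. fst i x * k x) \<le> snd i)"

definition solves :: "('x::finite \<Rightarrow> int) \<Rightarrow> 'x ineq set \<Rightarrow> bool" where
  "solves k S = (\<forall>i\<in>S. sat_ineq k i)"

definition entails :: "'x::finite ineq set \<Rightarrow> 'x ineq set \<Rightarrow> bool" where
  "entails S1 S2 = (\<forall>k. solves k S1 \<longrightarrow> solves k S2)"

definition lin_eq :: "('x \<Rightarrow> int) \<Rightarrow> int \<Rightarrow> 'x ineq set" where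
  "lin_eq a c = {(a, c), (\<lambda>x. - a x, - c)}"

definition lsys_vars :: "'x ineq set \<Rightarrow> 'x set" where
  "lsys_vars S = {x. \<exists>i\<in>S. fst i x \<noteq> 0}"

definition unit_vec :: "'x \<Rightarrow> 'x \<Rightarrow> int" where
  "unit_vec y = (\<lambda>x. if x = y then 1 else 0)"

datatype ('c, 'r) sym = Cls 'c | Rel 'r | Exi | Eqs

fun arity :: "('c, 'r) sym \<Rightarrow> nat" where
  "arity (Cls _) = 1"
| "arity (Rel _) = 2"
| "arity Exi = 1"
| "arity Eqs = 2"

datatype tv = tv0 | tv1 | tvU  \<comment> \<open>0, 1, 1/2 (unknown)\<close>

record ('o, 'c, 'r, 'x) pmodel =
  objs :: "'o set"
  interp :: "('c, 'r) sym \<Rightarrow> 'o list \<Rightarrow> tv"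
  scope :: "'x ineq set"

definition partial_model :: "('o, 'c, 'r, 'x) pmodel \<Rightarrow> bool" where
  "partial_model P = (finite (objs P) \<and> finite (scope P))"

definition tuples :: "('c, 'r) sym \<Rightarrow> 'o set \<Rightarrow> 'o list set" where
  "tuples \<sigma> A = {xs. length xs = arity \<sigma> \<and> set xs \<subseteq> A}"

definition concrete :: "('o, 'c, 'r, 'x::finite) pmodel \<Rightarrow> bool" where
  "concrete M = (partial_model M
     \<and> (\<forall>\<sigma>. \<forall>xs\<in>tuples \<sigma> (objs M). interp M \<sigma> xs \<in> {tv0, tv1})
     \<and> (\<forall>ob\<in>objs M. interp M Exi [ob] = tv1)
     \<and> (\<forall>o1\<in>objs M. \<forall>o2\<in>objs M. interp M Eqs [o1, o2] = tv1 \<longleftrightarrow> o1 = o2)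
     \<and> (\<exists>k. solves k (scope M)))"

definition refines_via ::
  "('p, 'c, 'r, 'x::finite) pmodel \<Rightarrow> ('q, 'c, 'r, 'x) pmodel \<Rightarrow> ('q \<Rightarrow> 'p) \<Rightarrow> bool" where
  "refines_via P Q ab = (ab ` objs Q \<subseteq> objs P
     \<and> (\<forall>\<sigma>. \<forall>qs\<in>tuples \<sigma> (objs Q).
           interp P \<sigma> (map ab qs) = tvU \<or> interp P \<sigma> (map ab qs) = interp Q \<sigma> qs)
     \<and> (\<forall>p\<in>objs P. interp P Exi [p] = tv1 \<longrightarrow> (\<exists>q\<in>objs Q. ab q = p))
     \<and> entails (scope Q) (scope P))"

definition refines :: "('p, 'c, 'r, 'x::finite) pmodel \<Rightarrow> ('q, 'c, 'r, 'x) pmodel \<Rightarrow> bool" where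
  "refines P Q = (\<exists>ab. refines_via P Q ab)"

datatype ('v, 'c, 'r) atom = ACls 'c 'v | ARel 'r 'v 'v | AExi 'v | AEq 'v 'v

fun atom_sym :: "('v, 'c, 'r) atom \<Rightarrow> ('c, 'r) sym" where
  "atom_sym (ACls c _) = Cls c"
| "atom_sym (ARel r _ _) = Rel r"
| "atom_sym (AExi _) = Exi"
| "atom_sym (AEq _ _) = Eqs"

fun atom_args :: "('v, 'c, 'r) atom \<Rightarrow> 'v list" where
  "atom_args (ACls _ v) = [v]"
| "atom_args (ARel _ u v) = [u, v]"
| "atom_args (AExi v) = [v]"
| "atom_args (AEq u v) = [u, v]"

datatype ('v, 'c, 'r) fo =
    FTrue
  | FAtom "('v, 'c, 'r) atom"
  | FNeg "('v, 'c, 'r) fo"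
  | FConj "('v, 'c, 'r) fo" "('v, 'c, 'r) fo"
  | FDisj "('v, 'c, 'r) fo" "('v, 'c, 'r) fo"
  | FEx 'v "('v, 'c, 'r) fo"
  | FAll 'v "('v, 'c, 'r) fo"

fun fv :: "('v, 'c, 'r) fo \<Rightarrow> 'v set" where
  "fv FTrue = {}"
| "fv (FAtom a) = set (atom_args a)"
| "fv (FNeg \<phi>) = fv \<phi>"
| "fv (FConj \<phi> \<psi>) = fv \<phi> \<union> fv \<psi>"
| "fv (FDisj \<phi> \<psi>) = fv \<phi> \<union> fv \<psi>"
| "fv (FEx v \<phi>) = fv \<phi> - {v}"
| "fv (FAll v \<phi>) = fv \<phi> - {v}"

fun holds :: "('o, 'c, 'r, 'x) pmodel \<Rightarrow> ('v \<Rightarrow> 'o) \<Rightarrow> ('v, 'c, 'r) fo \<Rightarrow> bool" where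
  "holds M Z FTrue = True"
| "holds M Z (FAtom a) = (interp M (atom_sym a) (map Z (atom_args a)) = tv1)"
| "holds M Z (FNeg \<phi>) = (\<not> holds M Z \<phi>)"
| "holds M Z (FConj \<phi> \<psi>) = (holds M Z \<phi> \<and> holds M Z \<psi>)"
| "holds M Z (FDisj \<phi> \<psi>) = (holds M Z \<phi> \<or> holds M Z \<psi>)"
| "holds M Z (FEx v \<phi>) = (\<exists>ob\<in>objs M. holds M (Z(v := ob)) \<phi>)"
| "holds M Z (FAll v \<phi>) = (\<forall>ob\<in>objs M. holds M (Z(v := ob)) \<phi>)"

definition match_count :: "('o, 'c, 'r, 'x) pmodel \<Rightarrow> ('v, 'c, 'r) fo \<Rightarrow> nat" where
  "match_count M \<phi> = card {Z \<in> fv \<phi> \<rightarrow>\<^sub>E objs M. holds M Z \<phi>}"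

text \<open>A theory is a pair (Phi, r) with Phi a finite set of predicates and r : Phi -> X.\<close>
definition theory_wf :: "('v, 'c, 'r) fo set \<Rightarrow> (('v, 'c, 'r) fo \<Rightarrow> 'x) \<Rightarrow> bool" where
  "theory_wf \<Phi> r = finite \<Phi>"

definition compatible ::
  "('o, 'c, 'r, 'x::finite) pmodel \<Rightarrow> ('v, 'c, 'r) fo set \<Rightarrow> (('v, 'c, 'r) fo \<Rightarrow> 'x) \<Rightarrow> bool" where
  "compatible M \<Phi> r = (\<forall>\<phi>\<in>\<Phi>.
     entails (scope M) (lin_eq (unit_vec (r \<phi>)) (int (match_count M \<phi>))))"

definition solutions ::
  "('p, 'c, 'r, 'x::finite) pmodel \<Rightarrow> ('v, 'c, 'r) fo set \<Rightarrow> (('v, 'c, 'r) fo \<Rightarrow> 'x)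
   \<Rightarrow> ('o, 'c, 'r, 'x) pmodel set" where
  "solutions P \<Phi> r = {M. concrete M \<and> refines P M \<and> compatible M \<Phi> r}"

text \<open>SFor b a body: a for-loop implementing the extend constraint with atom a, whose
  header is basic block b; SIf pos a body: an if-statement implementing the check
  literal a (pos) or not a (not pos); SBlock b: a plain basic block.\<close>
datatype ('b, 'v, 'c, 'r) stmt =
    SBlock 'b
  | SFor 'b "('v, 'c, 'r) atom" "('b, 'v, 'c, 'r) stmt list"
  | SIf bool "('v, 'c, 'r) atom" "('b, 'v, 'c, 'r) stmt list"

definition lit_fo :: "bool \<Rightarrow> ('v, 'c, 'r) atom \<Rightarrow> ('v, 'c, 'r) fo" where
  "lit_fo pos a = (if pos then FAtom a else FNeg (FAtom a))"

fun conj_list :: "('v, 'c, 'r) fo list \<Rightarrow> ('v, 'c, 'r) fo" where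
  "conj_list [] = FTrue"
| "conj_list [a] = a"
| "conj_list (a # as) = FConj a (conj_list as)"

text \<open>For every basic block: the list of atomic predicates of enclosing for/if statements,
  and, if the block is a loop header, the atom of that loop.\<close>
fun bbinfo :: "('v, 'c, 'r) fo list \<Rightarrow> ('b, 'v, 'c, 'r) stmt
               \<Rightarrow> ('b \<times> ('v, 'c, 'r) fo list \<times> ('v, 'c, 'r) atom option) list" where
  "bbinfo ctx (SBlock b) = [(b, ctx, None)]"
| "bbinfo ctx (SFor b a body) =
     (b, ctx, Some a) # concat (map (bbinfo (ctx @ [FAtom a])) body)"
| "bbinfo ctx (SIf pos a body) = concat (map (bbinfo (ctx @ [lit_fo pos a])) body)"

definition prog_info :: "('b, 'v, 'c, 'r) stmt list
    \<Rightarrow> ('b \<times> ('v, 'c, 'r) fo list \<times> ('v, 'c, 'r) atom option) list" where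
  "prog_info q = concat (map (bbinfo []) q)"

definition basic_blocks :: "('b, 'v, 'c, 'r) stmt list \<Rightarrow> 'b set" where
  "basic_blocks q = fst ` set (prog_info q)"

fun atom_vars :: "('v, 'c, 'r) atom \<Rightarrow> 'v set" where
  "atom_vars a = set (atom_args a)"

text \<open>Search-plan shape: each extend (loop) atom binds exactly one new variable,
  each check literal only uses already bound variables.\<close>
fun wf_stmt :: "'v set \<Rightarrow> ('b, 'v, 'c, 'r) stmt \<Rightarrow> bool" where
  "wf_stmt B (SBlock b) = True"
| "wf_stmt B (SFor b a body) =
     (\<exists>v. v \<notin> B \<and> atom_vars a - B = {v} \<and> (\<forall>s\<in>set body. wf_stmt (insert v B) s))"
| "wf_stmt B (SIf pos a body) = (atom_vars a \<subseteq> B \<and> (\<forall>s\<in>set body. wf_stmt B s))"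

definition query_program :: "('b, 'v, 'c, 'r) stmt list \<Rightarrow> bool" where
  "query_program q = ((\<forall>s\<in>set q. wf_stmt {} s) \<and> distinct (map fst (prog_info q)))"

definition psi :: "('b, 'v, 'c, 'r) stmt list \<Rightarrow> 'b \<Rightarrow> ('v, 'c, 'r) fo" where
  "psi q b = conj_list (fst (the (map_of (prog_info q) b)))"

definition psi' :: "('b, 'v, 'c, 'r) stmt list \<Rightarrow> 'b \<Rightarrow> ('v, 'c, 'r) fo option" where
  "psi' q b = (case the (map_of (prog_info q) b) of
                 (ctx, None) \<Rightarrow> None
               | (ctx, Some a) \<Rightarrow> Some (conj_list (ctx @ [FAtom a])))"

definition Psi :: "('b, 'v, 'c, 'r) stmt list \<Rightarrow> ('v, 'c, 'r) fo set" where
  "Psi q = psi q ` basic_blocks q \<union> {\<phi>. \<exists>b\<in>basic_blocks q. psi' q b = Some \<phi>}"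

definition wcfg :: "('b, 'v, 'c, 'r) stmt list \<Rightarrow> 'n set \<Rightarrow> ('n \<times> 'n) set \<Rightarrow> 'n \<Rightarrow> 'n
                    \<Rightarrow> ('n \<times> 'n \<Rightarrow> nat) \<Rightarrow> ('n \<Rightarrow> 'b) \<Rightarrow> bool" where
  "wcfg q V E s t w tr = (finite V \<and> E \<subseteq> V \<times> V \<and> s \<in> V \<and> t \<in> V
                          \<and> tr ` V \<subseteq> basic_blocks q)"

text \<open>Coefficient vector of the sum of f(e) over the edges in A (f injective on E).\<close>
definition edge_vec :: "('n \<times> 'n \<Rightarrow> 'x) \<Rightarrow> ('n \<times> 'n) set \<Rightarrow> 'x \<Rightarrow> int" where
  "edge_vec f A = (\<lambda>x. int (card {e\<in>A. f e = x}))"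

definition ipet_core :: "'n set \<Rightarrow> ('n \<times> 'n) set \<Rightarrow> 'n \<Rightarrow> 'n \<Rightarrow> ('n \<times> 'n \<Rightarrow> 'x)
                         \<Rightarrow> 'x ineq set" where
  "ipet_core V E s t f =
     lin_eq (edge_vec f {e\<in>E. fst e = s}) 1
   \<union> lin_eq (edge_vec f {e\<in>E. snd e = t}) 1
   \<union> (\<Union>n\<in>V - {s, t}. lin_eq (\<lambda>x. edge_vec f {e\<in>E. snd e = n} x
                                   - edge_vec f {e\<in>E. fst e = n} x) 0)
   \<union> {(\<lambda>x. - unit_vec (f e) x, 0) | e. e \<in> E}"

text \<open>S_IPET: the mandatory IPET constraints plus possibly further low-level flow facts
  (over the edge variables).\<close>
definition ipet_system :: "'n set \<Rightarrow> ('n \<times> 'n) set \<Rightarrow> 'n \<Rightarrow> 'n \<Rightarrow> ('n \<times> 'n \<Rightarrow> 'x)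
                           \<Rightarrow> 'x ineq set \<Rightarrow> bool" where
  "ipet_system V E s t f S = (finite S \<and> ipet_core V E s t f \<subseteq> S \<and> lsys_vars S \<subseteq> f ` E)"

definition merge_sys :: "('b, 'v, 'c, 'r) stmt list \<Rightarrow> ('n \<times> 'n) set \<Rightarrow> ('n \<Rightarrow> 'b)
      \<Rightarrow> ('n \<times> 'n \<Rightarrow> 'x) \<Rightarrow> (('v, 'c, 'r) fo \<Rightarrow> 'x) \<Rightarrow> 'x ineq set" where
  "merge_sys q E tr f r' =
     (\<Union>b\<in>basic_blocks q.
        lin_eq (\<lambda>x. unit_vec (r' (psi q b)) x
                    + (case psi' q b of None \<Rightarrow> 0 | Some \<phi> \<Rightarrow> unit_vec (r' \<phi>) x)
                    - edge_vec f {e\<in>E. tr (fst e) = b} x) 0)"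

definition witness_model :: "('o, 'c, 'r, 'x) pmodel \<Rightarrow> 'x ineq set \<Rightarrow> 'x ineq set
                             \<Rightarrow> ('o, 'c, 'r, 'x) pmodel" where
  "witness_model P S_IPET S_merge = P\<lparr>scope := scope P \<union> S_IPET \<union> S_merge\<rparr>"

definition fresh_extension :: "('v, 'c, 'r) fo set \<Rightarrow> (('v, 'c, 'r) fo \<Rightarrow> 'x)
     \<Rightarrow> ('v, 'c, 'r) fo set \<Rightarrow> 'x set \<Rightarrow> (('v, 'c, 'r) fo \<Rightarrow> 'x) \<Rightarrow> bool" where
  "fresh_extension \<Phi> r \<Psi>' used r' = ((\<forall>\<phi>\<in>\<Phi>. r' \<phi> = r \<phi>)
     \<and> inj_on r' (\<Psi>' - \<Phi>) \<and> (\<forall>\<psi>\<in>\<Psi>' - \<Phi>. r' \<psi> \<notin> used))"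

end

theory Submission
  imports Defs
begin

text \<open>Witness generation only adds constraints to the scope and only adds predicates to the
  theory, keeping the variables of the old ones. Both refinement (through entailment of
  scopes) and compatibility (a condition per predicate) are monotone under these changes,
  so every solution of the generated problem solves the original one. This soundness
  direction uses nothing about the query program, the CFG or the freshness of variables.\<close>

lemma entails_subset: "S2 \<subseteq> S1 \<Longrightarrow> entails S1 S2"
  by (auto simp: entails_def solves_def)

lemma entails_trans: "entails S1 S2 \<Longrightarrow> entails S2 S3 \<Longrightarrow> entails S1 S3"
  by (auto simp: entails_def)

lemma refines_via_weaken_scope:
  assumes "refines_via (P\<lparr>scope := S\<rparr>) Q ab" and "entails S (scope P)"
  shows "refines_via P Q ab"
  using assms entails_trans by (simp add: refines_via_def) blast

lemma refines_weaken_scope: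
  "refines (P\<lparr>scope := S\<rparr>) Q \<Longrightarrow> entails S (scope P) \<Longrightarrow> refines P Q"
  unfolding refines_def using refines_via_weaken_scope by blast

lemma compatible_subtheory:
  assumes "compatible M \<Phi>' r'" and "\<Phi> \<subseteq> \<Phi>'" and "\<forall>\<phi>\<in>\<Phi>. r' \<phi> = r \<phi>"
  shows "compatible M \<Phi> r"
  using assms unfolding compatible_def by (metis subsetD)

lemma solutions_weaken:
  assumes "entails S (scope P)" and "\<Phi> \<subseteq> \<Phi>'" and "\<forall>\<phi>\<in>\<Phi>. r' \<phi> = r \<phi>"
  shows "solutions (P\<lparr>scope := S\<rparr>) \<Phi>' r' \<subseteq> solutions P \<Phi> r"
  using assms refines_weaken_scope compatible_subtheory by (fastforce simp: solutions_def)

theorem lemmaA2: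
  fixes P :: "('o, 'c, 'r, 'x::finite) pmodel"
    and M :: "('m, 'c, 'r, 'x) pmodel"
    and \<Phi> :: "('v, 'c, 'r) fo set" and r :: "('v, 'c, 'r) fo \<Rightarrow> 'x"
    and q :: "('b, 'v, 'c, 'r) stmt list"
    and V :: "'n set" and E :: "('n \<times> 'n) set" and s t :: 'n
    and w :: "'n \<times> 'n \<Rightarrow> nat" and tr :: "'n \<Rightarrow> 'b"
    and f :: "'n \<times> 'n \<Rightarrow> 'x" and S_IPET :: "'x ineq set"
    and r' :: "('v, 'c, 'r) fo \<Rightarrow> 'x"
  assumes "partial_model P"
    and "theory_wf \<Phi> r"
    and "query_program q"
    and "wcfg q V E s t w tr"
    and "inj_on f E"
    and "ipet_system V E s t f S_IPET"
    and "f ` E \<inter> r ` \<Phi> = {}"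
    and "f ` E \<inter> lsys_vars (scope P) = {}"
    and "fresh_extension \<Phi> r (Psi q) (f ` E \<union> r ` \<Phi> \<union> lsys_vars (scope P)) r'"
    and "M \<in> solutions (witness_model P S_IPET (merge_sys q E tr f r')) (\<Phi> \<union> Psi q) r'"
  shows "M \<in> solutions P \<Phi> r"
proof -
  let ?S = "scope P \<union> S_IPET \<union> merge_sys q E tr f r'"
  have "entails ?S (scope P)"
    by (rule entails_subset) blast
  moreover have "\<forall>\<phi>\<in>\<Phi>. r' \<phi> = r \<phi>"
    using assms(9) by (simp add: fresh_extension_def)
  ultimately have "solutions (P\<lparr>scope := ?S\<rparr>) (\<Phi> \<union> Psi q) r' \<subseteq> solutions P \<Phi> r"
    by (intro solutions_weaken) auto
  with assms(10) show ?thesis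
    by (auto simp: witness_model_def)
qed

end
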